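(* Let $N:\Sigma\to c(X)$ be a multimeasure satisfying the countable chain condition. Then there is an at most countable family $\{x'_n:n\in\mathbb N\}\subseteq X'$ such that $$\bigcap_n \mathcal N[s(x'_n,N)]=\bigcap_{x'\in X'}\mathcal N[s(x',N)].$$
   Context: $(\Omega,\Sigma)$ is a measurable space and $X$ is a Hausdorff locally convex space with dual $X'$. $c(X)$ is the family of nonempty closed convex subsets of $X$; $s(x',C)=\sup\{\langle x',x\rangle:x\in C\}$. A multimeasure is a map $M:\Sigma\to c(X)$ such that for every $x'\in X'$ the set function $s(x',M(\cdot))$ is a $\sigma$-finite countably additive measure with values in $(-\infty,+\infty]$. $\mathcal N(N)=\{E\in\Sigma:N(E)=\{0\}\}$; $N$ satisfies the countable chain condition if every family of pairwise disjoint sets in $\Sigma\setminus\mathcal N(N)$ is at most countable. For a measure $\nu:\Sigma\to(-\infty,+\infty]$, $\mathcal N[\nu]=\{E\in\Sigma:\nu(F)=0\text{ for all }F\in\Sigma,\ F\subseteq E\}$. *)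

theory Defs
  imports "HOL-Analysis.Analysis"
begin

class locally_convex_space = real_vector + t2_space +
  assumes continuous_add_lcs: "\<And>x y::'a. filterlim (\<lambda>p. fst p + snd p) (nhds (x + y)) (nhds x \<times>\<^sub>F nhds y)"
  assumes continuous_scaleR_lcs: "\<And>(r::real) (x::'a). filterlim (\<lambda>p. fst p *\<^sub>R snd p) (nhds (r *\<^sub>R x)) (nhds r \<times>\<^sub>F nhds x)"
  assumes locally_convex:
    "\<And>U. open U \<Longrightarrow> (0::'a) \<in> U \<Longrightarrow> \<exists>V. open V \<and> 0 \<in> V \<and> V \<subseteq> U \<and>
       (\<forall>x\<in>V. \<forall>y\<in>V. \<forall>u v::real. 0 \<le> u \<longrightarrow> 0 \<le> v \<longrightarrow> u + v = 1 \<longrightarrow> u *\<^sub>R x + v *\<^sub>R y \<in> V)"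

definition dual_space :: "('a::locally_convex_space \<Rightarrow> real) set" where
  "dual_space = {f. linear f \<and> continuous_on UNIV f}"

definition cc_sets :: "'a::locally_convex_space set set" where
  "cc_sets = {C. C \<noteq> {} \<and> closed C \<and> convex C}"

definition supp_fun :: "('a \<Rightarrow> real) \<Rightarrow> 'a set \<Rightarrow> ereal" where
  "supp_fun f C = (SUP x\<in>C. ereal (f x))"

definition sf_ext_measure :: "'w measure \<Rightarrow> ('w set \<Rightarrow> ereal) \<Rightarrow> bool" where
  "sf_ext_measure M \<nu> \<longleftrightarrow>
     \<nu> {} = 0 \<and> (\<forall>E\<in>sets M. \<nu> E \<noteq> -\<infinity>) \<and>
     (\<forall>A::nat \<Rightarrow> 'w set. range A \<subseteq> sets M \<longrightarrow> disjoint_family A \<longrightarrow>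
         (\<lambda>n. \<nu> (A n)) sums \<nu> (\<Union>n. A n)) \<and>
     (\<exists>A::nat \<Rightarrow> 'w set. range A \<subseteq> sets M \<and> (\<Union>n. A n) = space M \<and> (\<forall>n. \<nu> (A n) < \<infinity>))"

definition multimeasure :: "'w measure \<Rightarrow> ('w set \<Rightarrow> 'a::locally_convex_space set) \<Rightarrow> bool" where
  "multimeasure M N \<longleftrightarrow>
     (\<forall>E\<in>sets M. N E \<in> cc_sets) \<and>
     (\<forall>f\<in>dual_space. sf_ext_measure M (\<lambda>E. supp_fun f (N E)))"

definition null_sets_mm :: "'w measure \<Rightarrow> ('w set \<Rightarrow> 'a::locally_convex_space set) \<Rightarrow> 'w set set" where
  "null_sets_mm M N = {E\<in>sets M. N E = {0}}"

definition countable_chain_condition ::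
  "'w measure \<Rightarrow> ('w set \<Rightarrow> 'a::locally_convex_space set) \<Rightarrow> bool" where
  "countable_chain_condition M N \<longleftrightarrow>
     (\<forall>F. F \<subseteq> sets M - null_sets_mm M N \<longrightarrow> disjoint F \<longrightarrow> countable F)"

definition null_sets_meas :: "'w measure \<Rightarrow> ('w set \<Rightarrow> ereal) \<Rightarrow> 'w set set" where
  "null_sets_meas M \<nu> = {E\<in>sets M. \<forall>F\<in>sets M. F \<subseteq> E \<longrightarrow> \<nu> F = 0}"

end

theory Submission
  imports Defs
begin

text \<open>
  For each functional x' the sets \<N>[s(x',N)] form a \<sigma>-ideal of \<Sigma>. Call a
  measurable set H homogeneous for x' if it is not in \<N>[s(x',N)] but each of its
  subsets in \<N>[s(x',N)] lies in every \<N>[s(y',N)]. Inside any set outside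
  \<N>[s(x',N)] one finds a homogeneous one: remove from it a maximal disjoint family of
  subsets in \<N>[s(x',N)] but outside the common ideal; the countable chain condition
  makes that family countable. A maximal disjoint family of homogeneous sets is again
  countable and exhausts \<Omega> up to a set of the common ideal, so the countably many
  functionals attached to its members already cut out the common ideal.
\<close>

lemma maximal_disjoint_subfamily:
  fixes S :: "'a set set"
  obtains W where "W \<subseteq> S" "disjoint W" "\<And>X. X \<in> S \<Longrightarrow> \<forall>w\<in>W. disjnt w X \<Longrightarrow> X \<in> W"
proof -
  let ?A = "{W. W \<subseteq> S \<and> disjoint W}"
  have "\<forall>C\<in>chains ?A. \<Union>C \<in> ?A"
    by (auto simp: chains_def intro: pairwise_chain_Union)
  from Zorn_Lemma[OF this] obtain W where "W \<in> ?A" and max: "\<forall>V\<in>?A. W \<subseteq> V \<longrightarrow> V = W"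
    by blast
  then have W: "W \<subseteq> S" "disjoint W"
    by simp_all
  have "X \<in> W" if "X \<in> S" "\<forall>w\<in>W. disjnt w X" for X
  proof -
    have "insert X W \<in> ?A"
      using W that by (auto simp: pairwise_insert disjnt_sym)
    with max show ?thesis by blast
  qed
  with W that show ?thesis by blast
qed

definition sigma_ideal :: "'w measure \<Rightarrow> 'w set set \<Rightarrow> bool" where
  "sigma_ideal M I \<longleftrightarrow> I \<subseteq> sets M \<and> (\<forall>A\<in>I. \<forall>B\<in>sets M. B \<subseteq> A \<longrightarrow> B \<in> I) \<and>
     (\<forall>C. countable C \<longrightarrow> C \<subseteq> I \<longrightarrow> \<Union>C \<in> I)"

lemma sigma_ideal_sets: "sigma_ideal M I \<Longrightarrow> A \<in> I \<Longrightarrow> A \<in> sets M"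
  unfolding sigma_ideal_def by blast

lemma sigma_ideal_subset: "sigma_ideal M I \<Longrightarrow> A \<in> I \<Longrightarrow> B \<in> sets M \<Longrightarrow> B \<subseteq> A \<Longrightarrow> B \<in> I"
  unfolding sigma_ideal_def by blast

lemma sigma_ideal_countable_Union: "sigma_ideal M I \<Longrightarrow> countable C \<Longrightarrow> C \<subseteq> I \<Longrightarrow> \<Union>C \<in> I"
  unfolding sigma_ideal_def by blast

lemma sigma_ideal_empty: "sigma_ideal M I \<Longrightarrow> {} \<in> I"
  using sigma_ideal_countable_Union[of M I "{}"] by simp

lemma sigma_ideal_Un: "sigma_ideal M I \<Longrightarrow> A \<in> I \<Longrightarrow> B \<in> I \<Longrightarrow> A \<union> B \<in> I"
  using sigma_ideal_countable_Union[of M I "{A, B}"] by simp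

locale ccc_sigma_ideal_family =
  fixes M :: "'w measure" and I :: "'i \<Rightarrow> 'w set set" and D :: "'i set"
  assumes sigma_ideal: "\<alpha> \<in> D \<Longrightarrow> sigma_ideal M (I \<alpha>)"
    and ccc: "F \<subseteq> sets M - (\<Inter>\<alpha>\<in>D. I \<alpha>) \<Longrightarrow> disjoint F \<Longrightarrow> countable F"
begin

definition homogeneous :: "'w set \<Rightarrow> 'i \<Rightarrow> bool" where
  "homogeneous H \<alpha> \<longleftrightarrow> \<alpha> \<in> D \<and> H \<in> sets M \<and> H \<notin> I \<alpha> \<and>
     (\<forall>H'\<in>I \<alpha>. H' \<subseteq> H \<longrightarrow> H' \<in> (\<Inter>\<beta>\<in>D. I \<beta>))"

lemma exists_homogeneous_subset:
  assumes G: "G \<in> sets M" and \<alpha>: "\<alpha> \<in> D" and G_notin: "G \<notin> I \<alpha>"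
  shows "\<exists>H\<subseteq>G. homogeneous H \<alpha>"
proof -
  let ?S = "{X\<in>I \<alpha>. X \<subseteq> G \<and> X \<notin> (\<Inter>\<beta>\<in>D. I \<beta>)}"
  obtain W where W: "W \<subseteq> ?S" "disjoint W" and max: "\<And>X. X \<in> ?S \<Longrightarrow> \<forall>w\<in>W. disjnt w X \<Longrightarrow> X \<in> W"
    by (rule maximal_disjoint_subfamily[of ?S]) blast
  have "countable W"
    using W sigma_ideal_sets[OF sigma_ideal[OF \<alpha>]] by (intro ccc) auto
  then have UW: "\<Union>W \<in> I \<alpha>"
    using W sigma_ideal_countable_Union[OF sigma_ideal[OF \<alpha>]] by auto
  define H where "H = G - \<Union>W"
  have "H \<in> sets M"
    unfolding H_def using G UW sigma_ideal_sets[OF sigma_ideal[OF \<alpha>]] by blast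
  moreover have "H \<notin> I \<alpha>"
  proof
    assume "H \<in> I \<alpha>"
    with UW have "H \<union> \<Union>W \<in> I \<alpha>"
      using sigma_ideal_Un[OF sigma_ideal[OF \<alpha>]] by blast
    moreover have "G \<subseteq> H \<union> \<Union>W"
      unfolding H_def by blast
    ultimately have "G \<in> I \<alpha>"
      using sigma_ideal_subset[OF sigma_ideal[OF \<alpha>] _ G] by blast
    with G_notin show False ..
  qed
  moreover have "H' \<in> (\<Inter>\<beta>\<in>D. I \<beta>)" if "H' \<in> I \<alpha>" "H' \<subseteq> H" for H'
  proof (rule ccontr)
    assume "H' \<notin> (\<Inter>\<beta>\<in>D. I \<beta>)"
    moreover have "\<forall>w\<in>W. disjnt w H'"
      using \<open>H' \<subseteq> H\<close> unfolding H_def disjnt_def by blast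
    ultimately have "H' \<in> W"
      using max that unfolding H_def by blast
    then have "H' = {}"
      using \<open>H' \<subseteq> H\<close> unfolding H_def by blast
    with \<open>H' \<notin> (\<Inter>\<beta>\<in>D. I \<beta>)\<close> show False
      using sigma_ideal_empty[OF sigma_ideal] by blast
  qed
  ultimately show ?thesis
    unfolding homogeneous_def H_def using \<alpha> by blast
qed

lemma exists_countable_homogeneous_cover:
  "\<exists>\<F>. countable \<F> \<and> (\<forall>F\<in>\<F>. \<exists>\<alpha>. homogeneous F \<alpha>) \<and> space M - \<Union>\<F> \<in> (\<Inter>\<beta>\<in>D. I \<beta>)"
proof -
  let ?S = "{F. \<exists>\<alpha>. homogeneous F \<alpha>}"
  obtain \<F> where \<F>: "\<F> \<subseteq> ?S" "disjoint \<F>" and max: "\<And>X. X \<in> ?S \<Longrightarrow> \<forall>w\<in>\<F>. disjnt w X \<Longrightarrow> X \<in> \<F>"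
    by (rule maximal_disjoint_subfamily[of ?S]) blast
  have \<F>_sets: "\<F> \<subseteq> sets M" and \<F>_notin: "\<F> \<inter> (\<Inter>\<beta>\<in>D. I \<beta>) = {}"
    using \<F>(1) unfolding homogeneous_def by auto
  then have "countable \<F>"
    using \<F>(2) by (intro ccc) auto
  have "space M - \<Union>\<F> \<in> I \<alpha>" if \<alpha>: "\<alpha> \<in> D" for \<alpha>
  proof (rule ccontr)
    assume "space M - \<Union>\<F> \<notin> I \<alpha>"
    moreover have "space M - \<Union>\<F> \<in> sets M"
      using \<open>countable \<F>\<close> \<F>_sets by (intro sets.Diff sets.countable_Union) auto
    ultimately obtain H where H: "H \<subseteq> space M - \<Union>\<F>" "homogeneous H \<alpha>"
      using exists_homogeneous_subset \<alpha> by blast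
    then have "H \<in> \<F>"
      using max unfolding disjnt_def by blast
    with H(1) have "H = {}" by blast
    with H(2) show False
      unfolding homogeneous_def using sigma_ideal_empty[OF sigma_ideal[OF \<alpha>]] by blast
  qed
  with \<open>countable \<F>\<close> \<F>(1) show ?thesis by blast
qed

theorem exists_countable_subfamily_same_Inter:
  assumes "D \<noteq> {}"
  shows "\<exists>A. countable A \<and> A \<subseteq> D \<and> A \<noteq> {} \<and> (\<Inter>\<alpha>\<in>A. I \<alpha>) = (\<Inter>\<alpha>\<in>D. I \<alpha>)"
proof -
  obtain \<F> where "countable \<F>" and hom: "\<forall>F\<in>\<F>. \<exists>\<alpha>. homogeneous F \<alpha>"
    and rest: "space M - \<Union>\<F> \<in> (\<Inter>\<beta>\<in>D. I \<beta>)"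
    using exists_countable_homogeneous_cover by blast
  obtain a where a: "\<And>F. F \<in> \<F> \<Longrightarrow> homogeneous F (a F)"
    using hom by metis
  obtain \<alpha>\<^sub>0 where "\<alpha>\<^sub>0 \<in> D" using assms by blast
  define A where "A = insert \<alpha>\<^sub>0 (a ` \<F>)"
  have "A \<subseteq> D"
    using \<open>\<alpha>\<^sub>0 \<in> D\<close> a unfolding A_def homogeneous_def by blast
  have "E \<in> I \<beta>" if E: "E \<in> (\<Inter>\<alpha>\<in>A. I \<alpha>)" and \<beta>: "\<beta> \<in> D" for E \<beta>
  proof -
    have "E \<in> sets M"
      using E sigma_ideal_sets[OF sigma_ideal[OF \<open>\<alpha>\<^sub>0 \<in> D\<close>]] unfolding A_def by blast
    have "E \<inter> F \<in> I \<beta>" if "F \<in> \<F>" for F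
    proof -
      have "a F \<in> D" "F \<in> sets M" and small: "\<forall>H'\<in>I (a F). H' \<subseteq> F \<longrightarrow> H' \<in> (\<Inter>\<beta>\<in>D. I \<beta>)"
        using a[OF that] unfolding homogeneous_def by blast+
      have "E \<in> I (a F)"
        using E that unfolding A_def by blast
      then have "E \<inter> F \<in> I (a F)"
        using \<open>E \<in> sets M\<close> \<open>F \<in> sets M\<close> sigma_ideal_subset[OF sigma_ideal[OF \<open>a F \<in> D\<close>]] by blast
      with small \<beta> show ?thesis
        by blast
    qed
    moreover have "E - \<Union>\<F> \<in> I \<beta>"
    proof (rule sigma_ideal_subset[OF sigma_ideal[OF \<beta>]])
      show "space M - \<Union>\<F> \<in> I \<beta>"
        using rest \<beta> by blast
      have "\<F> \<subseteq> sets M"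
        using a unfolding homogeneous_def by blast
      then show "E - \<Union>\<F> \<in> sets M"
        using \<open>E \<in> sets M\<close> \<open>countable \<F>\<close> by (intro sets.Diff sets.countable_Union) auto
      show "E - \<Union>\<F> \<subseteq> space M - \<Union>\<F>"
        using sets.sets_into_space[OF \<open>E \<in> sets M\<close>] by blast
    qed
    ultimately have "\<Union>(insert (E - \<Union>\<F>) ((\<inter>) E ` \<F>)) \<in> I \<beta>"
      using \<open>countable \<F>\<close> by (intro sigma_ideal_countable_Union[OF sigma_ideal[OF \<beta>]]) auto
    moreover have "\<Union>(insert (E - \<Union>\<F>) ((\<inter>) E ` \<F>)) = E" by blast
    ultimately show ?thesis by simp
  qed
  then have "(\<Inter>\<alpha>\<in>A. I \<alpha>) = (\<Inter>\<alpha>\<in>D. I \<alpha>)"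
    using \<open>A \<subseteq> D\<close> by blast
  moreover have "countable A"
    unfolding A_def using \<open>countable \<F>\<close> by simp
  ultimately show ?thesis
    using \<open>A \<subseteq> D\<close> unfolding A_def by blast
qed

end

lemma sigma_ideal_null_sets_meas:
  assumes "sf_ext_measure M \<nu>"
  shows "sigma_ideal M (null_sets_meas M \<nu>)"
proof -
  have empty: "\<nu> {} = 0" and additive: "\<And>A. range A \<subseteq> sets M \<Longrightarrow> disjoint_family A \<Longrightarrow>
      (\<lambda>n. \<nu> (A n)) sums \<nu> (\<Union>n. A n)"
    using assms unfolding sf_ext_measure_def by blast+
  have "\<Union>C \<in> null_sets_meas M \<nu>" if "countable C" "C \<subseteq> null_sets_meas M \<nu>" for C
  proof -
    have "{} \<in> null_sets_meas M \<nu>"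
      using empty unfolding null_sets_meas_def by auto
    define e where "e = from_nat_into (insert {} C)"
    have range_e: "range e = insert {} C"
      unfolding e_def using \<open>countable C\<close> by (intro range_from_nat_into) auto
    have e_null: "e n \<in> null_sets_meas M \<nu>" for n
      using range_e[THEN eqset_imp_iff, of "e n"] \<open>{} \<in> null_sets_meas M \<nu>\<close> \<open>C \<subseteq> null_sets_meas M \<nu>\<close>
      by auto
    then have e_sets: "range e \<subseteq> sets M"
      unfolding null_sets_meas_def by auto
    have "\<nu> F = 0" if F: "F \<in> sets M" "F \<subseteq> \<Union>C" for F
    proof -
      define A where "A n = F \<inter> disjointed e n" for n
      have "range A \<subseteq> sets M"
        unfolding A_def using F e_sets by (auto intro: sets.range_disjointed_sets[THEN subsetD])
      moreover have "disjoint_family A"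
        unfolding A_def using disjoint_family_disjointed[of e] by (auto simp: disjoint_family_on_def)
      ultimately have "(\<lambda>n. \<nu> (A n)) sums \<nu> (\<Union>n. A n)"
        by (rule additive)
      moreover have "(\<Union>n. A n) = F"
      proof -
        have "(\<Union>n. A n) = F \<inter> (\<Union>n. disjointed e n)"
          unfolding A_def by blast
        also have "\<dots> = F \<inter> \<Union>(range e)"
          by (simp add: UN_disjointed_eq)
        finally show ?thesis
          using F(2) range_e by auto
      qed
      moreover have "\<nu> (A n) = 0" for n
      proof -
        have "A n \<subseteq> e n"
          unfolding A_def using disjointed_subset[of e n] by blast
        with e_null[of n] \<open>range A \<subseteq> sets M\<close> show ?thesis
          unfolding null_sets_meas_def by blast
      qed
      ultimately have "(\<lambda>n. 0) sums \<nu> F"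
        by simp
      from sums_unique2[OF this sums_zero] show ?thesis .
    qed
    moreover have "\<Union>C \<in> sets M"
      using \<open>countable C\<close> \<open>C \<subseteq> null_sets_meas M \<nu>\<close> unfolding null_sets_meas_def
      by (intro sets.countable_Union) auto
    ultimately show ?thesis
      unfolding null_sets_meas_def by blast
  qed
  moreover have "B \<in> null_sets_meas M \<nu>" if "A \<in> null_sets_meas M \<nu>" "B \<in> sets M" "B \<subseteq> A" for A B
    using that unfolding null_sets_meas_def by auto
  moreover have "null_sets_meas M \<nu> \<subseteq> sets M"
    unfolding null_sets_meas_def by auto
  ultimately show ?thesis
    unfolding sigma_ideal_def by blast
qed

lemma supp_fun_singleton_zero: "linear f \<Longrightarrow> supp_fun f {0} = 0"
  unfolding supp_fun_def by (simp add: linear_0 zero_ereal_def)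

lemma multimeasure_non_null_subset:
  assumes N: "multimeasure M N" and f: "f \<in> dual_space"
    and X: "X \<in> sets M" "X \<notin> null_sets_meas M (\<lambda>E. supp_fun f (N E))"
  shows "\<exists>G\<in>sets M - null_sets_mm M N. G \<subseteq> X \<and> G \<noteq> {}"
proof -
  obtain G where G: "G \<in> sets M" "G \<subseteq> X" "supp_fun f (N G) \<noteq> 0"
    using X unfolding null_sets_meas_def by blast
  have "supp_fun f (N {}) = 0"
    using N f unfolding multimeasure_def sf_ext_measure_def by blast
  with G have "G \<noteq> {}"
    by blast
  moreover have "N G \<noteq> {0}"
    using G(3) f supp_fun_singleton_zero unfolding dual_space_def by fastforce
  ultimately show ?thesis
    using G unfolding null_sets_mm_def by blast
qed

lemma countable_chain_condition_countable_disjoint: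
  assumes ccc: "countable_chain_condition M N" and "disjoint F"
    and non_null: "\<And>X. X \<in> F \<Longrightarrow> \<exists>G\<in>sets M - null_sets_mm M N. G \<subseteq> X \<and> G \<noteq> {}"
  shows "countable F"
proof -
  obtain g where g: "\<And>X. X \<in> F \<Longrightarrow> g X \<in> sets M - null_sets_mm M N \<and> g X \<subseteq> X \<and> g X \<noteq> {}"
    using non_null by metis
  have disjoint_g: "disjnt (g X) (g Y)" if "X \<in> F" "Y \<in> F" "X \<noteq> Y" for X Y
    using \<open>disjoint F\<close> that g[OF that(1)] g[OF that(2)] unfolding pairwise_def disjnt_def by blast
  have "inj_on g F"
  proof (rule inj_onI, rule ccontr)
    fix X Y assume "X \<in> F" "Y \<in> F" "g X = g Y" "X \<noteq> Y"
    then show False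
      using disjoint_g[of X Y] g[of X] unfolding disjnt_def by auto
  qed
  have "g ` F \<subseteq> sets M - null_sets_mm M N"
    using g by blast
  moreover have "disjoint (g ` F)"
    using disjoint_g by (auto intro: pairwise_imageI)
  ultimately have "countable (g ` F)"
    using ccc unfolding countable_chain_condition_def by blast
  then show ?thesis
    using \<open>inj_on g F\<close> by (rule countable_image_inj_on)
qed

theorem lemma3p3:
  fixes M :: "'w measure" and N :: "'w set \<Rightarrow> 'a::locally_convex_space set"
  assumes "multimeasure M N"
    and "countable_chain_condition M N"
  shows "\<exists>x' :: nat \<Rightarrow> ('a \<Rightarrow> real). range x' \<subseteq> dual_space \<and>
           (\<Inter>n. null_sets_meas M (\<lambda>E. supp_fun (x' n) (N E)))
             = (\<Inter>f\<in>dual_space. null_sets_meas M (\<lambda>E. supp_fun f (N E)))"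
proof -
  let ?I = "\<lambda>f. null_sets_meas M (\<lambda>E. supp_fun f (N E))"
  interpret ccc_sigma_ideal_family M ?I dual_space
  proof
    show "sigma_ideal M (?I f)" if "f \<in> dual_space" for f
      using assms(1) that unfolding multimeasure_def by (blast intro: sigma_ideal_null_sets_meas)
    show "countable F" if "F \<subseteq> sets M - (\<Inter>f\<in>dual_space. ?I f)" "disjoint F" for F
      using that multimeasure_non_null_subset[OF assms(1)]
      by (intro countable_chain_condition_countable_disjoint[OF assms(2)]) blast+
  qed
  have "(\<lambda>_. 0) \<in> dual_space"
    unfolding dual_space_def by (simp add: linear_zero)
  then obtain A where A: "countable A" "A \<subseteq> dual_space" "A \<noteq> {}" "(\<Inter>f\<in>A. ?I f) = (\<Inter>f\<in>dual_space. ?I f)"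
    using exists_countable_subfamily_same_Inter by blast
  define x' where "x' = from_nat_into A"
  have "range x' = A"
    unfolding x'_def using A(3,1) by (rule range_from_nat_into)
  have "(\<Inter>n. ?I (x' n)) = (\<Inter>f\<in>range x'. ?I f)"
    by (simp only: image_image)
  also have "\<dots> = (\<Inter>f\<in>dual_space. ?I f)"
    using \<open>range x' = A\<close> A(4) by simp
  finally show ?thesis
    using \<open>range x' = A\<close> A(2) by (intro exI[of _ x'] conjI) simp_all
qed

end
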